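(* Let $\mathcal A,\mathcal B$ be unital $C^*$-algebras with faithful traces $\tau,\omega$, respectively, let $J:\mathcal A\to\mathcal B$ be a Jordan *-isomorphism and $C\in\mathcal B_+^{-1}$ such that $\omega(CJ(X))=\tau(X)$ for all $X\in\mathcal A$. Then $C$ is a central element of $\mathcal B$.
   Context: $\mathcal B_+^{-1}$ is the set of positive invertible elements. A trace is a positive linear functional with $\tau(AB)=\tau(BA)$; faithful means $\tau(A)=0$, $A\ge0$ implies $A=0$. A Jordan *-isomorphism is a linear bijection $J$ with $J(XY+YX)=J(X)J(Y)+J(Y)J(X)$ and $J(X^* )=J(X)^*$. *)

theory Defs
  imports Complex_Main
begin

text \<open>Abstract unital C*-algebras, as a type class. Complex scalar multiplication
  is an explicit operation compatible with the real scaling of the underlying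
  real Banach algebra with unit (norm 1 = 1).\<close>

class complex_scale =
  fixes scaleC :: "complex \<Rightarrow> 'a \<Rightarrow> 'a" (infixr "*\<^sub>C" 75)

class cstar_algebra = real_normed_algebra_1 + banach + complex_scale +
  fixes adj :: "'a \<Rightarrow> 'a"
  assumes scaleC_add_right: "a *\<^sub>C (x + y) = a *\<^sub>C x + a *\<^sub>C y"
    and scaleC_add_left: "(a + b) *\<^sub>C x = a *\<^sub>C x + b *\<^sub>C x"
    and scaleC_scaleC: "a *\<^sub>C (b *\<^sub>C x) = (a * b) *\<^sub>C x"
    and scaleC_one: "1 *\<^sub>C x = x"
    and scaleR_scaleC: "scaleR r x = complex_of_real r *\<^sub>C x"
    and mult_scaleC_left: "(a *\<^sub>C x) * y = a *\<^sub>C (x * y)"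
    and mult_scaleC_right: "x * (a *\<^sub>C y) = a *\<^sub>C (x * y)"
    and norm_scaleC: "norm (a *\<^sub>C x) = cmod a * norm x"
    and adj_adj: "adj (adj x) = x"
    and adj_add: "adj (x + y) = adj x + adj y"
    and adj_scaleC: "adj (a *\<^sub>C x) = cnj a *\<^sub>C adj x"
    and adj_mult: "adj (x * y) = adj y * adj x"
    and cstar_identity: "norm (adj x * x) = (norm x)\<^sup>2"

definition invertible_el :: "'a::cstar_algebra \<Rightarrow> bool" where
  "invertible_el x \<longleftrightarrow> (\<exists>y. x * y = 1 \<and> y * x = 1)"

definition cspectrum :: "'a::cstar_algebra \<Rightarrow> complex set" where
  "cspectrum x = {z. \<not> invertible_el (x - z *\<^sub>C 1)}"

definition selfadjoint :: "'a::cstar_algebra \<Rightarrow> bool" where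
  "selfadjoint x \<longleftrightarrow> adj x = x"

definition positive_el :: "'a::cstar_algebra \<Rightarrow> bool" where
  "positive_el x \<longleftrightarrow> selfadjoint x \<and> cspectrum x \<subseteq> {z. Im z = 0 \<and> 0 \<le> Re z}"

definition positive_invertible :: "'a::cstar_algebra \<Rightarrow> bool" where
  "positive_invertible x \<longleftrightarrow> positive_el x \<and> invertible_el x"

definition clinear_functional :: "('a::cstar_algebra \<Rightarrow> complex) \<Rightarrow> bool" where
  "clinear_functional f \<longleftrightarrow> (\<forall>x y. f (x + y) = f x + f y) \<and> (\<forall>a x. f (a *\<^sub>C x) = a * f x)"

definition clinear_map :: "('a::cstar_algebra \<Rightarrow> 'b::cstar_algebra) \<Rightarrow> bool" where
  "clinear_map f \<longleftrightarrow> (\<forall>x y. f (x + y) = f x + f y) \<and> (\<forall>a x. f (a *\<^sub>C x) = a *\<^sub>C f x)"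

definition is_trace :: "('a::cstar_algebra \<Rightarrow> complex) \<Rightarrow> bool" where
  "is_trace \<tau> \<longleftrightarrow> clinear_functional \<tau>
     \<and> (\<forall>x. positive_el x \<longrightarrow> Im (\<tau> x) = 0 \<and> 0 \<le> Re (\<tau> x))
     \<and> (\<forall>x y. \<tau> (x * y) = \<tau> (y * x))"

definition faithful :: "('a::cstar_algebra \<Rightarrow> complex) \<Rightarrow> bool" where
  "faithful \<tau> \<longleftrightarrow> (\<forall>x. positive_el x \<and> \<tau> x = 0 \<longrightarrow> x = 0)"

definition jordan_star_iso :: "('a::cstar_algebra \<Rightarrow> 'b::cstar_algebra) \<Rightarrow> bool" where
  "jordan_star_iso J \<longleftrightarrow> clinear_map J \<and> bij J
     \<and> (\<forall>X Y. J (X * Y + Y * X) = J X * J Y + J Y * J X)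
     \<and> (\<forall>X. J (adj X) = adj (J X))"

definition central :: "'a::cstar_algebra \<Rightarrow> bool" where
  "central c \<longleftrightarrow> (\<forall>y. c * y = y * c)"

end

theory Submission
  imports Defs
begin

text \<open>A Jordan homomorphism preserves triple products, \<open>J (X Y X) = J X J Y J X\<close>, and a
  trace cannot distinguish \<open>X Y X\<close> from \<open>X\<^sup>2 Y\<close> or \<open>Y X\<^sup>2\<close>. Transporting this through
  \<open>J\<close> gives \<open>2 \<omega>(C b d b) = \<omega>(C (b\<^sup>2 d + d b\<^sup>2))\<close> for all \<open>b, d\<close>, so by cyclicity the
  self-adjoint element \<open>e = 2 b C b - C b\<^sup>2 - b\<^sup>2 C\<close> satisfies \<open>\<omega>(e d) = 0\<close> for all \<open>d\<close>, and
  faithfulness gives \<open>e = 0\<close>. For self-adjoint \<open>b\<close> this says that \<open>k = b C - C b\<close> commutes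
  with \<open>b\<close>; then \<open>\<omega>(k\<^sup>2) = \<omega>(C (k b - b k)) = 0\<close>, and since \<open>\<i> k\<close> is self-adjoint, \<open>k = 0\<close>.
  Thus \<open>C\<close> commutes with every self-adjoint element, hence with everything.

  Faithfulness is used in the form \<open>\<omega>(g\<^sup>2) = 0 \<Longrightarrow> g = 0\<close> for self-adjoint \<open>g\<close>, which needs
  \<open>g\<^sup>2\<close> to be positive: the C*-identity gives \<open>\<parallel>g + \<i> t\<parallel>\<^sup>2 \<le> \<parallel>g\<parallel>\<^sup>2 + t\<^sup>2\<close>, which rules out
  non-real spectral values of \<open>g\<close>.\<close>

lemma additive_scaleC_right: "additive (\<lambda>x::'a::cstar_algebra. a *\<^sub>C x)"
  by unfold_locales (rule scaleC_add_right)

lemma additive_scaleC_left: "additive (\<lambda>a. a *\<^sub>C (x::'a::cstar_algebra))"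
  by unfold_locales (rule scaleC_add_left)

lemma additive_adj: "additive (adj :: 'a::cstar_algebra \<Rightarrow> 'a)"
  by unfold_locales (rule adj_add)

lemmas scaleC_zero_right [simp] = additive.zero[OF additive_scaleC_right]
  and scaleC_diff_right = additive.diff[OF additive_scaleC_right]
  and scaleC_minus_left = additive.minus[OF additive_scaleC_left]
  and adj_diff = additive.diff[OF additive_adj]

lemma adj_one [simp]: "adj (1::'a::cstar_algebra) = 1"
  using adj_mult[of "adj 1" "1::'a"] by (simp add: adj_adj)

lemma mult_scaleC_one_right [simp]: "(x::'a::cstar_algebra) * (a *\<^sub>C 1) = a *\<^sub>C x"
  by (simp add: mult_scaleC_right)

lemma mult_scaleC_one_left [simp]: "(a *\<^sub>C 1) * (x::'a::cstar_algebra) = a *\<^sub>C x"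
  by (simp add: mult_scaleC_left)

lemma selfadjoint_mult_self: "selfadjoint g \<Longrightarrow> selfadjoint (g * g)"
  by (simp add: selfadjoint_def adj_mult)

lemma norm_mult_self_selfadjoint: "selfadjoint g \<Longrightarrow> norm (g * g) = (norm g)\<^sup>2"
  using cstar_identity[of g] by (simp add: selfadjoint_def)

lemma clinear_functional_imp_additive: "clinear_functional f \<Longrightarrow> additive f"
  by unfold_locales (simp add: clinear_functional_def)

lemma clinear_map_imp_additive: "clinear_map f \<Longrightarrow> additive f"
  by unfold_locales (simp add: clinear_map_def)

lemma invertible_el_mult:
  assumes "invertible_el a" "invertible_el b"
  shows "invertible_el (a * b)"
proof -
  obtain a' where a: "a * a' = 1" "a' * a = 1" using assms(1) unfolding invertible_el_def by blast
  obtain b' where b: "b * b' = 1" "b' * b = 1" using assms(2) unfolding invertible_el_def by blast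
  have "(a * b) * (b' * a') = 1" by (simp add: mult.assoc flip: mult.assoc[of b b'] add: a b)
  moreover have "(b' * a') * (a * b) = 1" by (simp add: mult.assoc flip: mult.assoc[of a' a] add: a b)
  ultimately show ?thesis unfolding invertible_el_def by blast
qed

lemma invertible_el_scaleC:
  assumes "invertible_el a" "z \<noteq> 0"
  shows "invertible_el (z *\<^sub>C a)"
proof -
  obtain a' where a: "a * a' = 1" "a' * a = 1" using assms(1) unfolding invertible_el_def by blast
  have "(z *\<^sub>C a) * (inverse z *\<^sub>C a') = 1" "(inverse z *\<^sub>C a') * (z *\<^sub>C a) = 1"
    by (simp_all add: mult_scaleC_left mult_scaleC_right scaleC_scaleC a assms(2) scaleC_one)
  then show ?thesis unfolding invertible_el_def by blast
qed

lemma invertible_el_one_minus: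
  fixes x :: "'a::cstar_algebra"
  assumes "norm x < 1"
  shows "invertible_el (1 - x)"
proof -
  define s where "s = (\<Sum>n. x ^ n)"
  have s: "(\<lambda>n. x ^ n) sums s"
    unfolding s_def using complete_algebra_summable_geometric[OF assms] by (rule summable_sums)
  have telescope: "(\<lambda>n. x ^ n - x ^ Suc n) sums 1"
    using telescope_sums'[OF LIMSEQ_power_zero[OF assms]] by simp
  have "(1 - x) * x ^ n = x ^ n - x ^ Suc n" "x ^ n * (1 - x) = x ^ n - x ^ Suc n" for n
    by (simp_all add: algebra_simps power_commutes)
  then have "(\<lambda>n. (1 - x) * x ^ n) sums 1" "(\<lambda>n. x ^ n * (1 - x)) sums 1"
    using telescope by simp_all
  then have "(1 - x) * s = 1" "s * (1 - x) = 1"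
    using sums_mult[OF s] sums_mult2[OF s] by (blast intro: sums_unique2)+
  then show ?thesis unfolding invertible_el_def by blast
qed

lemma invertible_el_diff_scaleC_one:
  fixes x :: "'a::cstar_algebra"
  assumes "norm x < cmod z"
  shows "invertible_el (x - z *\<^sub>C 1)"
proof -
  have z: "z \<noteq> 0" using assms by auto
  define y where "y = inverse z *\<^sub>C x"
  have "norm y = norm x / cmod z" by (simp add: y_def norm_scaleC norm_inverse divide_inverse)
  then have "norm y < 1" using assms z by simp
  then have "invertible_el ((- z) *\<^sub>C (1 - y))"
    using z by (intro invertible_el_scaleC invertible_el_one_minus) auto
  moreover have "(- z) *\<^sub>C (1 - y) = x - z *\<^sub>C 1"
    using z by (simp add: y_def scaleC_diff_right scaleC_scaleC scaleC_minus_left scaleC_one)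
  ultimately show ?thesis by simp
qed

lemma norm_selfadjoint_add_imaginary_le:
  fixes g :: "'a::cstar_algebra"
  assumes "selfadjoint g"
  shows "(norm (g + (\<i> * t) *\<^sub>C 1))\<^sup>2 \<le> (norm g)\<^sup>2 + t\<^sup>2"
proof -
  let ?h = "g + (\<i> * t) *\<^sub>C 1"
  have "adj ?h * ?h = (g - (\<i> * t) *\<^sub>C 1) * ?h"
    using assms by (simp add: adj_add adj_scaleC selfadjoint_def scaleC_minus_left)
  also have "(g - (\<i> * t) *\<^sub>C 1) * ?h = g * g + (complex_of_real (t\<^sup>2)) *\<^sub>C 1"
    by (simp add: algebra_simps scaleC_diff_right scaleC_scaleC scaleC_minus_left power2_eq_square)
  finally have "adj ?h * ?h = g * g + (complex_of_real (t\<^sup>2)) *\<^sub>C 1" by simp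
  then have "(norm ?h)\<^sup>2 = norm (g * g + (complex_of_real (t\<^sup>2)) *\<^sub>C 1)"
    using cstar_identity[of ?h] by simp
  also have "\<dots> \<le> norm (g * g) + norm ((complex_of_real (t\<^sup>2)) *\<^sub>C (1::'a))"
    by (rule norm_triangle_ineq)
  also have "\<dots> = (norm g)\<^sup>2 + t\<^sup>2"
    using assms by (simp add: norm_mult_self_selfadjoint norm_scaleC norm_power)
  finally show ?thesis .
qed

lemma selfadjoint_invertible_diff_nonreal:
  fixes g :: "'a::cstar_algebra"
  assumes "selfadjoint g" and "Im w \<noteq> 0"
  shows "invertible_el (g - w *\<^sub>C 1)"
proof (rule ccontr)
  assume singular: "\<not> invertible_el (g - w *\<^sub>C 1)"
  have bound: "(Re w)\<^sup>2 + (Im w + t)\<^sup>2 \<le> (norm g)\<^sup>2 + t\<^sup>2" for t :: real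
  proof -
    let ?h = "g + (\<i> * t) *\<^sub>C 1"
    have "?h - (w + \<i> * t) *\<^sub>C 1 = g - w *\<^sub>C 1"
      by (simp add: scaleC_add_left)
    then have "cmod (w + \<i> * t) \<le> norm ?h"
      using singular invertible_el_diff_scaleC_one[of ?h "w + \<i> * t"] by (metis not_le)
    then have "(cmod (w + \<i> * t))\<^sup>2 \<le> (norm ?h)\<^sup>2"
      by (simp add: power_mono)
    then show ?thesis
      using norm_selfadjoint_add_imaginary_le[OF assms(1), of t] by (simp add: cmod_power2)
  qed
  define t where "t = ((norm g)\<^sup>2 + 1) / (2 * Im w)"
  have "2 * Im w * t = (norm g)\<^sup>2 + 1"
    using assms(2) by (simp add: t_def)
  moreover have "(Re w)\<^sup>2 + (Im w + t)\<^sup>2 = (Re w)\<^sup>2 + (Im w)\<^sup>2 + 2 * Im w * t + t\<^sup>2"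
    by (simp add: power2_eq_square algebra_simps)
  ultimately show False
    using bound[of t] by (smt (verit) zero_le_power2)
qed

lemma positive_el_mult_self:
  fixes g :: "'a::cstar_algebra"
  assumes "selfadjoint g"
  shows "positive_el (g * g)"
  unfolding positive_el_def
proof (intro conjI subsetI)
  show "selfadjoint (g * g)"
    using assms by (rule selfadjoint_mult_self)
next
  fix z
  assume "z \<in> cspectrum (g * g)"
  then have singular: "\<not> invertible_el (g * g - z *\<^sub>C 1)"
    by (simp add: cspectrum_def)
  define w where "w = csqrt z"
  have wz: "w * w = z"
    using power2_csqrt[of z] by (simp add: w_def power2_eq_square)
  have "(g - w *\<^sub>C 1) * (g - (- w) *\<^sub>C 1) = g * g - z *\<^sub>C 1"
    by (simp add: algebra_simps scaleC_minus_left scaleC_diff_right scaleC_scaleC flip: wz)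
  then have "\<not> invertible_el ((g - w *\<^sub>C 1) * (g - (- w) *\<^sub>C 1))"
    using singular by simp
  then have "Im w = 0"
    using invertible_el_mult selfadjoint_invertible_diff_nonreal[OF assms, of w]
      selfadjoint_invertible_diff_nonreal[OF assms, of "- w"] by force
  then show "z \<in> {z. Im z = 0 \<and> 0 \<le> Re z}"
    by (simp flip: wz)
qed

lemma faithful_selfadjoint_mult_self_eq_zero:
  fixes g :: "'a::cstar_algebra"
  assumes "faithful \<omega>" and "selfadjoint g" and "\<omega> (g * g) = 0"
  shows "g = 0"
proof -
  have "g * g = 0"
    using assms positive_el_mult_self unfolding faithful_def by blast
  then show ?thesis
    using norm_mult_self_selfadjoint[OF assms(2)] by simp
qed

definition jordan_hom :: "('a::ring \<Rightarrow> 'b::ring) \<Rightarrow> bool" where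
  "jordan_hom J \<longleftrightarrow> additive J \<and> (\<forall>X Y. J (X * Y + Y * X) = J X * J Y + J Y * J X)"

lemma jordan_star_iso_imp_jordan_hom: "jordan_star_iso J \<Longrightarrow> jordan_hom J"
  unfolding jordan_star_iso_def jordan_hom_def by (blast intro: clinear_map_imp_additive)

lemma jordan_hom_square:
  fixes J :: "'a::ring \<Rightarrow> 'b::real_algebra"
  assumes "jordan_hom J"
  shows "J (X * X) = J X * J X"
proof -
  have add: "additive J" and "J (X * X + X * X) = J X * J X + J X * J X"
    using assms unfolding jordan_hom_def by auto
  then have "scaleR 2 (J (X * X)) = scaleR 2 (J X * J X)"
    by (simp add: additive.add scaleR_2)
  then show ?thesis by simp
qed

lemma jordan_hom_triple:
  fixes J :: "'a::ring \<Rightarrow> 'b::real_algebra"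
  assumes "jordan_hom J"
  shows "J (X * Y * X) = J X * J Y * J X"
proof -
  have add: "additive J" and jordan: "\<And>X Y. J (X * Y + Y * X) = J X * J Y + J Y * J X"
    using assms unfolding jordan_hom_def by auto
  have "X * Y * X + X * Y * X = X * (X * Y + Y * X) + (X * Y + Y * X) * X - (X * X * Y + Y * (X * X))"
    by (simp add: algebra_simps)
  then have "J (X * Y * X + X * Y * X)
      = J X * (J X * J Y + J Y * J X) + (J X * J Y + J Y * J X) * J X - (J X * J X * J Y + J Y * (J X * J X))"
    by (simp add: additive.diff[OF add] jordan jordan_hom_square[OF assms])
  then have "scaleR 2 (J (X * Y * X)) = scaleR 2 (J X * J Y * J X)"
    by (simp add: additive.add[OF add] scaleR_2 algebra_simps)
  then show ?thesis by simp
qed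

lemma is_trace_additive: "is_trace \<tau> \<Longrightarrow> additive \<tau>"
  unfolding is_trace_def by (blast intro: clinear_functional_imp_additive)

lemma is_trace_cyclic: "is_trace \<tau> \<Longrightarrow> \<tau> (x * y) = \<tau> (y * x)"
  unfolding is_trace_def by blast

lemma is_trace_scaleC: "is_trace \<tau> \<Longrightarrow> \<tau> (a *\<^sub>C x) = a * \<tau> x"
  unfolding is_trace_def clinear_functional_def by blast

lemma weighted_trace_jordan_triple:
  fixes \<tau> :: "'a::cstar_algebra \<Rightarrow> complex" and J :: "'a \<Rightarrow> 'b::cstar_algebra"
  assumes "is_trace \<tau>" and "jordan_hom J" and "surj J"
    and weight: "\<And>X. \<omega> (C * J X) = \<tau> X"
  shows "\<omega> (C * (b * d * b)) + \<omega> (C * (b * d * b)) = \<omega> (C * (b * b * d + d * (b * b)))"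
proof -
  obtain X Y where b: "b = J X" and d: "d = J Y"
    using \<open>surj J\<close> by (metis surjD)
  have "b * b * d + d * (b * b) = J (X * X * Y + Y * (X * X))"
    using assms(2) unfolding b d jordan_hom_def by (simp add: jordan_hom_square[OF assms(2)])
  moreover have "b * d * b = J (X * Y * X)"
    unfolding b d by (simp add: jordan_hom_triple[OF assms(2)])
  moreover have "\<tau> (X * Y * X) + \<tau> (X * Y * X) = \<tau> (X * X * Y + Y * (X * X))"
    using is_trace_cyclic[OF assms(1), of "X * Y" X] is_trace_cyclic[OF assms(1), of X "Y * X"]
    by (simp add: additive.add[OF is_trace_additive[OF assms(1)]] mult.assoc)
  ultimately show ?thesis by (simp add: weight)
qed

lemma faithful_trace_double_commutator_eq_zero:
  fixes \<omega> :: "'a::cstar_algebra \<Rightarrow> complex" and C b :: 'a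
  assumes "is_trace \<omega>" and "faithful \<omega>" and "selfadjoint C" and "selfadjoint b"
    and triple: "\<And>d. \<omega> (C * (b * d * b)) + \<omega> (C * (b * d * b)) = \<omega> (C * (b * b * d + d * (b * b)))"
  shows "(b * C - C * b) * b = b * (b * C - C * b)"
proof -
  define e where "e = b * C * b + b * C * b - C * b * b - b * b * C"
  have add: "additive \<omega>" using assms(1) by (rule is_trace_additive)
  have "\<omega> (e * d) = 0" for d
  proof -
    have "\<omega> (C * (b * d * b)) = \<omega> (b * C * b * d)"
      using is_trace_cyclic[OF assms(1), of "C * b * d" b] by (simp add: mult.assoc)
    moreover have "\<omega> (C * (d * (b * b))) = \<omega> (b * b * C * d)"
      using is_trace_cyclic[OF assms(1), of "C * d" "b * b"] by (simp add: mult.assoc)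
    ultimately show ?thesis
      using triple[of d] by (simp add: e_def algebra_simps additive.add[OF add] additive.diff[OF add])
  qed
  moreover have "selfadjoint e"
    using assms(3,4) by (simp add: e_def selfadjoint_def adj_add adj_diff adj_mult mult.assoc)
  ultimately have "e = 0"
    using faithful_selfadjoint_mult_self_eq_zero[OF assms(2)] by blast
  then show ?thesis
    by (simp add: e_def algebra_simps)
qed

lemma faithful_trace_commutator_eq_zero:
  fixes \<omega> :: "'a::cstar_algebra \<Rightarrow> complex" and C b :: 'a
  assumes "is_trace \<omega>" and "faithful \<omega>" and "selfadjoint C" and "selfadjoint b"
    and commutes: "(b * C - C * b) * b = b * (b * C - C * b)"
  shows "C * b = b * C"
proof -
  define k where "k = b * C - C * b"
  have "\<omega> (k * k) = \<omega> (b * (C * k)) - \<omega> (C * (b * k))"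
    by (simp add: k_def left_diff_distrib mult.assoc additive.diff[OF is_trace_additive[OF assms(1)]])
  also have "\<omega> (b * (C * k)) = \<omega> (C * (k * b))"
    using is_trace_cyclic[OF assms(1), of b "C * k"] by (simp add: mult.assoc)
  finally have "\<omega> (k * k) = 0"
    using commutes by (simp add: k_def)
  moreover have "(\<i> *\<^sub>C k) * (\<i> *\<^sub>C k) = (- 1) *\<^sub>C (k * k)"
    by (simp add: mult_scaleC_left mult_scaleC_right scaleC_scaleC)
  moreover have "selfadjoint (\<i> *\<^sub>C k)"
    using assms(3,4) by (simp add: k_def selfadjoint_def adj_scaleC adj_diff adj_mult
        scaleC_diff_right scaleC_minus_left)
  ultimately have "\<i> *\<^sub>C k = 0"
    using faithful_selfadjoint_mult_self_eq_zero[OF assms(2)] is_trace_scaleC[OF assms(1)] by simp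
  then have "k = 0"
    using scaleC_scaleC[of "- \<i>" \<i> k] by (simp add: scaleC_one)
  then show ?thesis
    by (simp add: k_def)
qed

lemma central_if_commutes_selfadjoint:
  fixes C :: "'a::cstar_algebra"
  assumes "\<And>b. selfadjoint b \<Longrightarrow> C * b = b * C"
  shows "central C"
  unfolding central_def
proof
  fix y :: 'a
  define h where "h = (1/2) *\<^sub>C (y + adj y)"
  define k where "k = (- \<i>/2) *\<^sub>C (y - adj y)"
  have "selfadjoint h"
    by (simp add: h_def selfadjoint_def adj_scaleC adj_add adj_adj add.commute)
  moreover have "selfadjoint k"
    by (simp add: k_def selfadjoint_def adj_scaleC adj_diff adj_adj scaleC_diff_right scaleC_minus_left)
  moreover have y: "y = h + \<i> *\<^sub>C k"
    by (simp add: h_def k_def scaleC_scaleC scaleC_add_right scaleC_diff_right algebra_simps scaleC_one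
        flip: scaleC_add_left)
  ultimately show "C * y = y * C"
    using assms by (simp add: y distrib_left distrib_right mult_scaleC_left mult_scaleC_right)
qed

theorem lemma18:
  fixes \<tau> :: "'a::cstar_algebra \<Rightarrow> complex"
    and \<omega> :: "'b::cstar_algebra \<Rightarrow> complex"
    and J :: "'a \<Rightarrow> 'b"
    and C :: 'b
  assumes "is_trace \<tau>" and "faithful \<tau>"
    and "is_trace \<omega>" and "faithful \<omega>"
    and "jordan_star_iso J"
    and "positive_invertible C"
    and "\<forall>X. \<omega> (C * J X) = \<tau> X"
  shows "central C"
proof (rule central_if_commutes_selfadjoint)
  fix b :: 'b
  assume b: "selfadjoint b"
  have C: "selfadjoint C"
    using assms(6) unfolding positive_invertible_def positive_el_def by blast
  have "jordan_hom J" and "surj J"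
    using assms(5) by (auto simp: jordan_star_iso_def bij_is_surj intro: jordan_star_iso_imp_jordan_hom)
  then have "\<omega> (C * (b * d * b)) + \<omega> (C * (b * d * b)) = \<omega> (C * (b * b * d + d * (b * b)))" for d
    using weighted_trace_jordan_triple[OF assms(1)] assms(7) by blast
  then have "(b * C - C * b) * b = b * (b * C - C * b)"
    using faithful_trace_double_commutator_eq_zero[OF assms(3,4) C b] by blast
  then show "C * b = b * C"
    using faithful_trace_commutator_eq_zero[OF assms(3,4) C b] by blast
qed

end
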